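(* If a topological space $X$ admits an $\omega^\omega$-base at a point $x\in X$, then $X$ is $(\omega_1,\omega)_k$-equiconvergent at $x$.
   Context: $X$ has an $\omega^\omega$-base at $x$ if there is a neighborhood base $(U_\alpha)_{\alpha\in\omega^\omega}$ at $x$ with $U_\beta\subseteq U_\alpha$ whenever $\alpha\le\beta$ pointwise in $\omega^\omega$. $X$ is $(\omega_1,\omega)_k$-equiconvergent at $x$ if for every indexed family $\{x_\alpha\}_{\alpha\in\omega_1}$ of sequences in $X^\omega$ converging to $x$ there is a countably infinite $\Lambda\subseteq\omega_1$ such that for every neighborhood $O_x$ of $x$ there is $n\in\omega$ with $x_\alpha(m)\in O_x$ for all $m\ge n$ and all $\alpha\in\Lambda$. *)

theory Defs
  imports "HOL-Analysis.Analysis"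
begin

definition nbhd :: "'a topology \<Rightarrow> 'a \<Rightarrow> 'a set \<Rightarrow> bool" where
  "nbhd X x N \<longleftrightarrow> (\<exists>V. openin X V \<and> x \<in> V \<and> V \<subseteq> N)"

definition has_omega_omega_base :: "'a topology \<Rightarrow> 'a \<Rightarrow> bool" where
  "has_omega_omega_base X x \<longleftrightarrow>
     (\<exists>U :: (nat \<Rightarrow> nat) \<Rightarrow> 'a set.
        (\<forall>\<alpha>. nbhd X x (U \<alpha>)) \<and>
        (\<forall>N. nbhd X x N \<longrightarrow> (\<exists>\<alpha>. U \<alpha> \<subseteq> N)) \<and>
        (\<forall>\<alpha> \<beta>. (\<forall>n. \<alpha> n \<le> \<beta> n) \<longrightarrow> U \<beta> \<subseteq> U \<alpha>))"

text \<open>omega_1 is represented by an arbitrary index set of cardinality aleph_1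
  (= cardSuc of the cardinal of nat), taken inside an index type 'i.\<close>
definition omega1_equiconvergent_at :: "'a topology \<Rightarrow> 'a \<Rightarrow> 'i itself \<Rightarrow> bool" where
  "omega1_equiconvergent_at X x (idx :: 'i itself) \<longleftrightarrow>
     (\<forall>(I :: 'i set) (s :: 'i \<Rightarrow> nat \<Rightarrow> 'a).
        ordIso2 (card_of I) (cardSuc natLeq) \<longrightarrow>
        (\<forall>\<alpha>\<in>I. range (s \<alpha>) \<subseteq> topspace X \<and> limitin X (s \<alpha>) x sequentially) \<longrightarrow>
        (\<exists>\<Lambda>. \<Lambda> \<subseteq> I \<and> countable \<Lambda> \<and> infinite \<Lambda> \<and>
           (\<forall>W. nbhd X x W \<longrightarrow> (\<exists>n. \<forall>m\<ge>n. \<forall>\<alpha>\<in>\<Lambda>. s \<alpha> m \<in> W))))"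

end

theory Submission
  imports Defs "HOL-Library.Countable_Set_Type"
begin

text \<open>Fix a monotone \<open>\<omega>\<^sup>\<omega>\<close>-base \<open>U\<close> at \<open>x\<close>. For a sequence \<open>s\<close> converging to \<open>x\<close>
  and \<open>\<psi> \<in> \<omega>\<^sup>\<omega>\<close>, a diagonal argument yields an initial segment \<open>t = \<psi>|k\<close> such that
  \<open>s m \<in> U \<phi>\<close> for all \<open>m \<ge> k\<close> and all \<open>\<phi>\<close> extending \<open>t\<close>. These segments form a
  subset \<open>Z\<^sub>\<alpha>\<close> of the countable set of finite sequences, so a counting argument
  gives an index \<open>a\<close> among uncountably many such that every finite subset of
  \<open>Z\<^sub>a\<close> lies in \<open>Z\<^sub>\<beta>\<close> for infinitely many \<open>\<beta>\<close>. Enumerating the finite sequences,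
  this yields a decreasing sequence of infinite index sets, and an infinite
  pseudo-intersection \<open>\<Lambda>\<close> of it works: given \<open>U \<psi>\<close>, the segment \<open>\<psi>|k \<in> Z\<^sub>a\<close> lies
  in \<open>Z\<^sub>\<beta>\<close> for all but finitely many \<open>\<beta> \<in> \<Lambda>\<close>, and the finitely many exceptions
  converge individually.\<close>

lemma uncountable_if_card_of_ordIso_cardSuc_natLeq:
  assumes "ordIso2 (card_of I) (cardSuc natLeq)"
  shows "uncountable I"
proof
  assume "countable I"
  then have "ordLeq2 (card_of I) natLeq"
    by (simp add: countable_card_le_natLeq)
  moreover have "ordLess2 natLeq (cardSuc natLeq)"
    by (simp add: cardSuc_greater natLeq_Card_order)
  ultimately show False
    using assms by (meson not_ordLess_ordLeq ordIso_iff_ordLeq ordLeq_transitive)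
qed

lemma uncountable_ex_index_finite_subsets_infinitely_shared:
  fixes Z :: "'i \<Rightarrow> 'b::countable set"
  assumes "uncountable I"
  obtains a where "a \<in> I" "\<And>F. finite F \<Longrightarrow> F \<subseteq> Z a \<Longrightarrow> infinite {\<beta>\<in>I. F \<subseteq> Z \<beta>}"
proof (rule ccontr)
  assume "\<not> thesis"
  with that obtain G where G: "\<And>a. a \<in> I \<Longrightarrow> finite (G a) \<and> G a \<subseteq> Z a \<and> finite {\<beta>\<in>I. G a \<subseteq> Z \<beta>}"
    by metis
  have cover: "I \<subseteq> (\<Union>F\<in>G ` I. {\<beta>\<in>I. F \<subseteq> Z \<beta>})"
    using G by blast
  have "countable (G ` I)"
    by (rule countable_subset[OF _ countable_Collect_finite]) (use G in auto)
  then have "countable (\<Union>F\<in>G ` I. {\<beta>\<in>I. F \<subseteq> Z \<beta>})"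
    by (rule countable_UN) (use G in \<open>auto intro: countable_finite\<close>)
  then show False
    using cover assms countable_subset by blast
qed

lemma infinite_sets_ex_inj_choice:
  assumes "\<And>n. infinite (A n)"
  obtains f :: "nat \<Rightarrow> 'a" where "inj f" "\<And>n. f n \<in> A n"
proof -
  have "\<exists>f. \<forall>n. f n \<in> A n \<and> f n \<notin> f ` {..<n}"
  proof (rule dependent_wellorder_choice)
    fix n :: nat and f :: "nat \<Rightarrow> 'a"
    have "infinite (A n - f ` {..<n})"
      using assms by (simp add: Diff_infinite_finite)
    then show "\<exists>r. r \<in> A n \<and> r \<notin> f ` {..<n}"
      by (meson Diff_iff finite.emptyI finite_subset subsetI)
  qed (metis image_cong lessThan_iff)
  then obtain f where f: "\<And>n. f n \<in> A n" "\<And>n. f n \<notin> f ` {..<n}"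
    by blast
  have "inj f"
    by (rule linorder_injI) (metis f(2) imageI lessThan_iff)
  with f(1) show thesis
    using that by blast
qed

lemma decseq_infinite_ex_pseudo_intersection:
  fixes A :: "nat \<Rightarrow> 'a set"
  assumes "decseq A" and "\<And>n. infinite (A n)"
  obtains \<Lambda> where "\<Lambda> \<subseteq> A 0" "countable \<Lambda>" "infinite \<Lambda>" "\<And>n. finite (\<Lambda> - A n)"
proof -
  obtain f where "inj f" and f: "\<And>n. f n \<in> A n"
    using infinite_sets_ex_inj_choice assms(2) by blast
  have late: "f m \<in> A n" if "n \<le> m" for m n
    using f[of m] \<open>decseq A\<close> that by (auto simp: decseq_def)
  have "range f - A n \<subseteq> f ` {..<n}" for n
  proof
    fix b assume "b \<in> range f - A n"
    then obtain m where "b = f m" and "m < n"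
      using late not_le by blast
    then show "b \<in> f ` {..<n}"
      by blast
  qed
  then have "finite (range f - A n)" for n
    by (meson finite_imageI finite_lessThan finite_subset)
  moreover have "range f \<subseteq> A 0"
    using f \<open>decseq A\<close> by (auto simp: decseq_def)
  ultimately show thesis
    using that \<open>inj f\<close> range_inj_infinite by blast
qed

lemma ex_pointwise_bound_of_stabilizing_sequence:
  fixes \<Phi> :: "nat \<Rightarrow> nat \<Rightarrow> nat"
  assumes "\<And>k c. c < k \<Longrightarrow> \<Phi> k c = \<psi> c"
  shows "\<exists>\<Psi>. \<forall>k c. \<Phi> k c \<le> \<Psi> c"
proof
  show "\<forall>k c. \<Phi> k c \<le> \<psi> c + (\<Sum>k\<le>c. \<Phi> k c)"
  proof (intro allI)
    fix k c
    show "\<Phi> k c \<le> \<psi> c + (\<Sum>k\<le>c. \<Phi> k c)"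
    proof (cases "k \<le> c")
      case True
      then have "\<Phi> k c \<le> (\<Sum>k\<le>c. \<Phi> k c)"
        by (intro member_le_sum) auto
      then show ?thesis by simp
    next
      case False
      then show ?thesis using assms by simp
    qed
  qed
qed

definition tail_in_cylinder :: "((nat \<Rightarrow> nat) \<Rightarrow> 'a set) \<Rightarrow> (nat \<Rightarrow> 'a) \<Rightarrow> nat list \<Rightarrow> bool" where
  "tail_in_cylinder U s t \<longleftrightarrow>
     (\<forall>\<phi>. (\<forall>i<length t. \<phi> i = t ! i) \<longrightarrow> (\<forall>m\<ge>length t. s m \<in> U \<phi>))"

lemma tail_in_cylinder_prefixD:
  assumes "tail_in_cylinder U s (map \<psi> [0..<k])" and "k \<le> m"
  shows "s m \<in> U \<psi>"
  using assms by (simp add: tail_in_cylinder_def)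

lemma ex_prefix_tail_in_cylinder:
  assumes conv: "\<And>\<psi>. eventually (\<lambda>m. s m \<in> U \<psi>) sequentially"
    and mono: "\<And>\<phi> \<psi>. (\<forall>n. \<phi> n \<le> \<psi> n) \<Longrightarrow> U \<psi> \<subseteq> U \<phi>"
  shows "\<exists>k. tail_in_cylinder U s (map \<psi> [0..<k])"
proof (rule ccontr)
  assume "\<not> ?thesis"
  then have "\<forall>k. \<exists>\<phi> m. (\<forall>c<k. \<phi> c = \<psi> c) \<and> k \<le> m \<and> s m \<notin> U \<phi>"
    by (auto simp: tail_in_cylinder_def)
  then obtain \<Phi> M where \<Phi>: "\<And>k c. c < k \<Longrightarrow> \<Phi> k c = \<psi> c"
    and M: "\<And>k. k \<le> M k" "\<And>k. s (M k) \<notin> U (\<Phi> k)"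
    by metis
  obtain \<Psi> where "\<And>k c. \<Phi> k c \<le> \<Psi> c"
    using ex_pointwise_bound_of_stabilizing_sequence[of \<Phi> \<psi>] \<Phi> by blast
  then have U\<Psi>: "U \<Psi> \<subseteq> U (\<Phi> k)" for k
    using mono by blast
  obtain n where "\<forall>m\<ge>n. s m \<in> U \<Psi>"
    using conv[of \<Psi>] unfolding eventually_sequentially by blast
  then show False
    using M U\<Psi> by blast
qed

lemma uncountable_ex_uniformly_eventually_subfamily:
  fixes s :: "'i \<Rightarrow> nat \<Rightarrow> 'a" and U :: "(nat \<Rightarrow> nat) \<Rightarrow> 'a set"
  assumes "uncountable I"
    and conv: "\<And>\<alpha> \<psi>. \<alpha> \<in> I \<Longrightarrow> eventually (\<lambda>m. s \<alpha> m \<in> U \<psi>) sequentially"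
    and mono: "\<And>\<phi> \<psi>. (\<forall>n. \<phi> n \<le> \<psi> n) \<Longrightarrow> U \<psi> \<subseteq> U \<phi>"
  obtains \<Lambda> where "\<Lambda> \<subseteq> I" "countable \<Lambda>" "infinite \<Lambda>"
    "\<And>\<psi>. eventually (\<lambda>m. \<forall>\<alpha>\<in>\<Lambda>. s \<alpha> m \<in> U \<psi>) sequentially"
proof -
  define Z where "Z \<alpha> = {t. tail_in_cylinder U (s \<alpha>) t}" for \<alpha>
  obtain a where "a \<in> I" and shared: "\<And>F. finite F \<Longrightarrow> F \<subseteq> Z a \<Longrightarrow> infinite {\<beta>\<in>I. F \<subseteq> Z \<beta>}"
    using uncountable_ex_index_finite_subsets_infinitely_shared[OF \<open>uncountable I\<close>] by blast
  define A where "A n = {\<beta>\<in>I. Z a \<inter> from_nat ` {..n} \<subseteq> Z \<beta>}" for n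
  have "decseq A"
    unfolding decseq_def A_def by auto
  moreover have "infinite (A n)" for n
    unfolding A_def by (rule shared) auto
  ultimately obtain \<Lambda> where "\<Lambda> \<subseteq> A 0" "countable \<Lambda>" "infinite \<Lambda>"
    and cofinite: "\<And>n. finite (\<Lambda> - A n)"
    using decseq_infinite_ex_pseudo_intersection by blast
  moreover have "\<Lambda> \<subseteq> I"
    using \<open>\<Lambda> \<subseteq> A 0\<close> by (auto simp: A_def)
  moreover have "eventually (\<lambda>m. \<forall>\<alpha>\<in>\<Lambda>. s \<alpha> m \<in> U \<psi>) sequentially" for \<psi>
  proof -
    obtain k where "tail_in_cylinder U (s a) (map \<psi> [0..<k])"
      using ex_prefix_tail_in_cylinder conv[OF \<open>a \<in> I\<close>] mono by blast
    then have t: "map \<psi> [0..<k] \<in> Z a \<inter> from_nat ` {..to_nat (map \<psi> [0..<k])}"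
      unfolding Z_def by (auto intro: image_eqI[where x = "to_nat (map \<psi> [0..<k])"])
    let ?B = "\<Lambda> - A (to_nat (map \<psi> [0..<k]))"
    have "\<forall>m\<ge>k. s \<beta> m \<in> U \<psi>" if "\<beta> \<in> \<Lambda> - ?B" for \<beta>
      using that t by (auto simp: A_def Z_def intro: tail_in_cylinder_prefixD)
    then have "eventually (\<lambda>m. \<forall>\<beta>\<in>\<Lambda> - ?B. s \<beta> m \<in> U \<psi>) sequentially"
      unfolding eventually_sequentially by blast
    moreover have "eventually (\<lambda>m. \<forall>\<beta>\<in>?B. s \<beta> m \<in> U \<psi>) sequentially"
      by (rule eventually_ball_finite) (use cofinite \<open>\<Lambda> \<subseteq> I\<close> conv in auto)
    ultimately show ?thesis
      by eventually_elim blast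
  qed
  ultimately show thesis
    using that by blast
qed

lemma limitin_eventually_nbhd:
  assumes "limitin X f l F" and "nbhd X l N"
  shows "eventually (\<lambda>m. f m \<in> N) F"
proof -
  obtain V where "openin X V" "l \<in> V" "V \<subseteq> N"
    using assms(2) unfolding nbhd_def by blast
  then have "eventually (\<lambda>m. f m \<in> V) F"
    using assms(1) unfolding limitin_def by blast
  then show ?thesis
    by eventually_elim (use \<open>V \<subseteq> N\<close> in blast)
qed

theorem theorem4p1:
  fixes X :: "'a topology" and x :: 'a
  assumes "x \<in> topspace X"
    and "has_omega_omega_base X x"
  shows "omega1_equiconvergent_at X x TYPE('i)"
  unfolding omega1_equiconvergent_at_def
proof (intro allI impI)
  obtain U :: "(nat \<Rightarrow> nat) \<Rightarrow> 'a set" where nbhd_U: "\<And>\<psi>. nbhd X x (U \<psi>)"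
    and base: "\<And>N. nbhd X x N \<Longrightarrow> \<exists>\<psi>. U \<psi> \<subseteq> N"
    and mono: "\<And>\<phi> \<psi>. (\<forall>n. \<phi> n \<le> \<psi> n) \<Longrightarrow> U \<psi> \<subseteq> U \<phi>"
    using assms(2) unfolding has_omega_omega_base_def by metis
  fix I :: "'i set" and s :: "'i \<Rightarrow> nat \<Rightarrow> 'a"
  assume card: "ordIso2 (card_of I) (cardSuc natLeq)"
    and lim: "\<forall>\<alpha>\<in>I. range (s \<alpha>) \<subseteq> topspace X \<and> limitin X (s \<alpha>) x sequentially"
  have ev: "eventually (\<lambda>m. s \<alpha> m \<in> U \<psi>) sequentially" if "\<alpha> \<in> I" for \<alpha> \<psi>
    using lim that by (intro limitin_eventually_nbhd[OF _ nbhd_U]) blast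
  obtain \<Lambda> where "\<Lambda> \<subseteq> I" "countable \<Lambda>" "infinite \<Lambda>"
    and uniform: "\<And>\<psi>. eventually (\<lambda>m. \<forall>\<alpha>\<in>\<Lambda>. s \<alpha> m \<in> U \<psi>) sequentially"
    using uncountable_ex_uniformly_eventually_subfamily
      [of I s U, OF uncountable_if_card_of_ordIso_cardSuc_natLeq[OF card] ev mono]
    by blast
  show "\<exists>\<Lambda>. \<Lambda> \<subseteq> I \<and> countable \<Lambda> \<and> infinite \<Lambda> \<and>
      (\<forall>W. nbhd X x W \<longrightarrow> (\<exists>n. \<forall>m\<ge>n. \<forall>\<alpha>\<in>\<Lambda>. s \<alpha> m \<in> W))"
  proof (rule exI[of _ \<Lambda>], intro conjI allI impI)
    show "\<Lambda> \<subseteq> I" "countable \<Lambda>" "infinite \<Lambda>" by fact+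
    fix W assume "nbhd X x W"
    then obtain \<psi> where "U \<psi> \<subseteq> W"
      using base by blast
    then show "\<exists>n. \<forall>m\<ge>n. \<forall>\<alpha>\<in>\<Lambda>. s \<alpha> m \<in> W"
      using uniform[of \<psi>] unfolding eventually_sequentially by blast
  qed
qed

end
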